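(* Let $X$ be an $n$-valued group and $x\in X$. (a) If $S^*(x,r)=\emptyset$ for some $r\in\mathbb{N}$, then $S^*(x,r')=\emptyset$ for every $r'>r$. (b) If $r_1,\dots,r_k\in\mathbb{N}$ are such that $S^*(x,r_i)\ne\emptyset$ for all $i$, then $$S^*(x,r_1+\dots+r_k)\subseteq \operatorname{Set}\bigl(S^*(x,r_1)*\dots*S^*(x,r_k)\bigr).$$
   Context: An $n$-valued group is a set $X$ with an associative $n$-valued multiplication $*:X\times X\to\operatorname{Sym}^nX$ (values are $n$-multi-sets), with a unit $e$ ($e*x=x*e=[x,\dots,x]$) and an inverse map; multiplication is extended to multi-sets (in particular to finite subsets, regarded as multi-sets) elementwise with multiplicities. For a multi-set $M$, $\operatorname{Set}(M)$ is the set of distinct elements of $M$. $x^{*r}=x*x*\dots*x$ ($r$ factors). Define $B^*(x,0)=S^*(x,0)=\emptyset$ and for $r\in\mathbb{N}$: $B^*(x,r)=\bigcup_{i=1}^r\operatorname{Set}(x^{*i})$ and $S^*(x,r)=B^*(x,r)\setminus B^*(x,r-1)$. *)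

theory Defs
  imports Main "HOL-Library.Multiset"
begin

text \<open>An n-valued multiplication is modelled as mul :: 'a => 'a => 'a multiset
  (values are multisets of size n); the carrier X is the whole type 'a.\<close>

definition mmul :: "('a \<Rightarrow> 'a \<Rightarrow> 'a multiset) \<Rightarrow> 'a multiset \<Rightarrow> 'a multiset \<Rightarrow> 'a multiset" where
  "mmul mul M N = (\<Sum>x\<in>#M. \<Sum>y\<in>#N. mul x y)"

definition n_valued_group ::
  "nat \<Rightarrow> ('a \<Rightarrow> 'a \<Rightarrow> 'a multiset) \<Rightarrow> 'a \<Rightarrow> ('a \<Rightarrow> 'a) \<Rightarrow> bool" where
  "n_valued_group n mul e ginv \<longleftrightarrow>
     n \<ge> 1 \<and>
     (\<forall>x y. size (mul x y) = n) \<and>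
     (\<forall>x y z. mmul mul (mul x y) {#z#} = mmul mul {#x#} (mul y z)) \<and>
     (\<forall>x. mul e x = replicate_mset n x \<and> mul x e = replicate_mset n x) \<and>
     (\<forall>x. e \<in># mul (ginv x) x \<and> e \<in># mul x (ginv x))"

text \<open>x^{*r}: mpow x 1 = [x], mpow x (r+1) = mpow x r * x (only used for r >= 1).\<close>
fun mpow :: "('a \<Rightarrow> 'a \<Rightarrow> 'a multiset) \<Rightarrow> 'a \<Rightarrow> nat \<Rightarrow> 'a multiset" where
  "mpow mul x 0 = {#}"
| "mpow mul x (Suc 0) = {#x#}"
| "mpow mul x (Suc (Suc r)) = mmul mul (mpow mul x (Suc r)) {#x#}"

definition Bstar :: "('a \<Rightarrow> 'a \<Rightarrow> 'a multiset) \<Rightarrow> 'a \<Rightarrow> nat \<Rightarrow> 'a set" where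
  "Bstar mul x r = (\<Union>i\<in>{1..r}. set_mset (mpow mul x i))"

definition Sstar :: "('a \<Rightarrow> 'a \<Rightarrow> 'a multiset) \<Rightarrow> 'a \<Rightarrow> nat \<Rightarrow> 'a set" where
  "Sstar mul x r = (if r = 0 then {} else Bstar mul x r - Bstar mul x (r - 1))"

fun mlist_prod :: "('a \<Rightarrow> 'a \<Rightarrow> 'a multiset) \<Rightarrow> 'a multiset list \<Rightarrow> 'a multiset" where
  "mlist_prod mul [] = {#}"
| "mlist_prod mul (M # Ms) = foldl (mmul mul) M Ms"

end

theory Submission
  imports Defs
begin

text \<open>Write x^k for the k-th multiset power of x. By associativity, z lies in x^(a+b) iff
  z lies in u * v for some u in x^a and v in x^b. For (a), an element z appearing first in
  x^(r+1) lies in w * x for some w in x^r; if S*(x,r) is empty, w already lies in some x^j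
  with j < r, so z lies in x^(j+1), a contradiction. For (b), if z in S*(x,a+b) lies in
  u * v as above and u lay in an earlier power x^j, then z would lie in x^(j+b); hence u is
  in S*(x,a), likewise v is in S*(x,b), and induction on the number of summands finishes.\<close>

lemma mem_mmul_iff: "z \<in># mmul mul M N \<longleftrightarrow> (\<exists>a\<in>#M. \<exists>b\<in>#N. z \<in># mul a b)"
  unfolding mmul_def by (induction M) auto

lemma mem_mpow_Suc_iff:
  "r \<ge> 1 \<Longrightarrow> z \<in># mpow mul x (Suc r) \<longleftrightarrow> (\<exists>w\<in>#mpow mul x r. z \<in># mul w x)"
  by (cases r) (auto simp: mem_mmul_iff)

lemma mem_Sstar_iff:
  "z \<in> Sstar mul x r \<longleftrightarrow>
     r \<ge> 1 \<and> z \<in># mpow mul x r \<and> (\<forall>j. 1 \<le> j \<longrightarrow> j < r \<longrightarrow> z \<notin># mpow mul x j)"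
  unfolding Sstar_def Bstar_def
  by (cases r) (auto simp: less_Suc_eq_le le_Suc_eq)

lemma finite_Sstar: "finite (Sstar mul x r)"
  unfolding Sstar_def Bstar_def by auto

lemma Sstar_nonempty_imp_pos: "Sstar mul x r \<noteq> {} \<Longrightarrow> r \<ge> 1"
  by (auto simp: mem_Sstar_iff)

lemma Sstar_empty_Suc:
  assumes "r \<ge> 1" and empty: "Sstar mul x r = {}"
  shows "Sstar mul x (Suc r) = {}"
proof (rule ccontr)
  assume "Sstar mul x (Suc r) \<noteq> {}"
  then obtain z where z: "z \<in> Sstar mul x (Suc r)" by blast
  then obtain w where w: "w \<in># mpow mul x r" "z \<in># mul w x"
    using \<open>r \<ge> 1\<close> by (auto simp: mem_Sstar_iff mem_mpow_Suc_iff)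
  have "w \<notin> Sstar mul x r" using empty by blast
  then obtain j where j: "1 \<le> j" "j < r" "w \<in># mpow mul x j"
    using w \<open>r \<ge> 1\<close> by (auto simp: mem_Sstar_iff)
  then have "z \<in># mpow mul x (Suc j)" using w by (auto simp: mem_mpow_Suc_iff)
  then show False using z j by (auto simp: mem_Sstar_iff)
qed

lemma Sstar_empty_mono:
  assumes "r \<ge> 1" "Sstar mul x r = {}" "r \<le> r'"
  shows "Sstar mul x r' = {}"
  using assms(3)
proof (induction r' rule: dec_induct)
  case base then show ?case using assms(2) .
next
  case (step r') then show ?case using assms(1) by (simp add: Sstar_empty_Suc)
qed

context
  fixes mul :: "'a \<Rightarrow> 'a \<Rightarrow> 'a multiset"
  assumes assoc: "\<And>u v w. mmul mul (mul u v) {#w#} = mmul mul {#u#} (mul v w)"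
begin

lemma mem_mpow_add_iff:
  assumes "a \<ge> 1" "b \<ge> 1"
  shows "z \<in># mpow mul x (a + b) \<longleftrightarrow> (\<exists>u\<in>#mpow mul x a. \<exists>v\<in>#mpow mul x b. z \<in># mul u v)"
  using assms(2)
proof (induction b arbitrary: z rule: nat_induct_at_least)
  case base
  then show ?case using assms(1) by (simp add: mem_mpow_Suc_iff)
next
  case (Suc b)
  have assoc_mem: "(\<exists>w\<in>#mul u v. z \<in># mul w x) \<longleftrightarrow> (\<exists>t\<in>#mul v x. z \<in># mul u t)" for u v
  proof -
    have "z \<in># mmul mul (mul u v) {#x#} \<longleftrightarrow> z \<in># mmul mul {#u#} (mul v x)"
      by (simp only: assoc)
    then show ?thesis by (simp add: mem_mmul_iff)
  qed
  have "z \<in># mpow mul x (a + Suc b) \<longleftrightarrow> (\<exists>w\<in>#mpow mul x (a + b). z \<in># mul w x)"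
    using assms(1) by (simp add: mem_mpow_Suc_iff)
  also have "\<dots> \<longleftrightarrow> (\<exists>u\<in>#mpow mul x a. \<exists>v\<in>#mpow mul x b. \<exists>w\<in>#mul u v. z \<in># mul w x)"
    using Suc.IH by blast
  also have "\<dots> \<longleftrightarrow> (\<exists>u\<in>#mpow mul x a. \<exists>v\<in>#mpow mul x b. \<exists>t\<in>#mul v x. z \<in># mul u t)"
    using assoc_mem by blast
  also have "\<dots> \<longleftrightarrow> (\<exists>u\<in>#mpow mul x a. \<exists>t\<in>#mpow mul x (Suc b). z \<in># mul u t)"
    using mem_mpow_Suc_iff[OF Suc.hyps, where mul = mul and x = x] by blast
  finally show ?case .
qed

lemma Sstar_add_decompose:
  assumes a: "a \<ge> 1" and b: "b \<ge> 1" and z: "z \<in> Sstar mul x (a + b)"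
  obtains u v where "u \<in> Sstar mul x a" "v \<in> Sstar mul x b" "z \<in># mul u v"
proof -
  from z obtain u v where uv: "u \<in># mpow mul x a" "v \<in># mpow mul x b" "z \<in># mul u v"
    using mem_mpow_add_iff[OF a b] by (auto simp: mem_Sstar_iff)
  have "u \<notin># mpow mul x j" if "1 \<le> j" "j < a" for j
  proof
    assume "u \<in># mpow mul x j"
    then have "z \<in># mpow mul x (j + b)" using mem_mpow_add_iff[OF \<open>1 \<le> j\<close> b] uv by blast
    then show False using z \<open>1 \<le> j\<close> \<open>j < a\<close> by (auto simp: mem_Sstar_iff)
  qed
  then have "u \<in> Sstar mul x a" using uv a by (auto simp: mem_Sstar_iff)
  moreover have "v \<notin># mpow mul x j" if "1 \<le> j" "j < b" for j
  proof
    assume "v \<in># mpow mul x j"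
    then have "z \<in># mpow mul x (a + j)" using mem_mpow_add_iff[OF a \<open>1 \<le> j\<close>] uv by blast
    then show False using z \<open>1 \<le> j\<close> \<open>j < b\<close> by (auto simp: mem_Sstar_iff)
  qed
  then have "v \<in> Sstar mul x b" using uv b by (auto simp: mem_Sstar_iff)
  ultimately show ?thesis using that uv(3) by blast
qed

lemma Sstar_add_subset_foldl_mmul:
  assumes "a \<ge> 1" "\<forall>r\<in>set rs. r \<ge> 1" "Sstar mul x a \<subseteq> set_mset M"
  shows "Sstar mul x (a + sum_list rs)
           \<subseteq> set_mset (foldl (mmul mul) M (map (\<lambda>r. mset_set (Sstar mul x r)) rs))"
  using assms
proof (induction rs arbitrary: a M)
  case Nil then show ?case by simp
next
  case (Cons r rs)
  have "r \<ge> 1" using Cons.prems(2) by simp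
  have "Sstar mul x (a + r) \<subseteq> set_mset (mmul mul M (mset_set (Sstar mul x r)))"
  proof
    fix z assume "z \<in> Sstar mul x (a + r)"
    then obtain u v where "u \<in> Sstar mul x a" "v \<in> Sstar mul x r" "z \<in># mul u v"
      using Sstar_add_decompose[OF Cons.prems(1) \<open>r \<ge> 1\<close>] by blast
    then show "z \<in># mmul mul M (mset_set (Sstar mul x r))"
      using Cons.prems(3) by (auto simp: mem_mmul_iff finite_Sstar)
  qed
  then show ?case using Cons.IH[of "a + r"] Cons.prems by (simp add: add.assoc)
qed

lemma Sstar_sum_list_subset:
  assumes "\<forall>r\<in>set rs. Sstar mul x r \<noteq> {}"
  shows "Sstar mul x (sum_list rs)
           \<subseteq> set_mset (mlist_prod mul (map (\<lambda>r. mset_set (Sstar mul x r)) rs))"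
proof (cases rs)
  case Nil then show ?thesis by (simp add: Sstar_def)
next
  case (Cons r rs')
  have "\<forall>r\<in>set rs. r \<ge> 1"
    using assms Sstar_nonempty_imp_pos[of mul x] by blast
  then show ?thesis
    using Sstar_add_subset_foldl_mmul[of r rs' x "mset_set (Sstar mul x r)"]
    by (simp add: Cons finite_Sstar)
qed

end

theorem mainTheorem6:
  fixes n :: nat and mul :: "'a \<Rightarrow> 'a \<Rightarrow> 'a multiset" and e :: 'a and ginv :: "'a \<Rightarrow> 'a"
    and x :: 'a
  assumes "n_valued_group n mul e ginv"
  shows "(\<forall>r r'. r \<ge> 1 \<and> Sstar mul x r = {} \<and> r < r' \<longrightarrow> Sstar mul x r' = {})
    \<and> (\<forall>rs :: nat list. (\<forall>r\<in>set rs. Sstar mul x r \<noteq> {}) \<longrightarrow>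
         Sstar mul x (sum_list rs)
           \<subseteq> set_mset (mlist_prod mul (map (\<lambda>r. mset_set (Sstar mul x r)) rs)))"
proof (intro conjI allI impI)
  fix r r' assume "r \<ge> 1 \<and> Sstar mul x r = {} \<and> r < r'"
  then show "Sstar mul x r' = {}" using Sstar_empty_mono[of r mul x r'] by auto
next
  have assoc: "mmul mul (mul u v) {#w#} = mmul mul {#u#} (mul v w)" for u v w
    using assms unfolding n_valued_group_def by blast
  fix rs :: "nat list" assume "\<forall>r\<in>set rs. Sstar mul x r \<noteq> {}"
  then show "Sstar mul x (sum_list rs)
      \<subseteq> set_mset (mlist_prod mul (map (\<lambda>r. mset_set (Sstar mul x r)) rs))"
    using Sstar_sum_list_subset[OF assoc] by blast
qed

end
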